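(* Let $F$ be an edge-transitive graph, fix an edge $xy$ of $F$, let $F'=F\setminus xy$, and for an integer $t\ge2$ let $F'_t$ be the graph obtained from $F'[K_t]$ by adding one edge between a vertex of the copy of $K_t$ replacing $x$ and a vertex of the copy of $K_t$ replacing $y$. If $G$ is a regular $F$-saturated graph, then for every $t\ge2$ the graph $G[K_t]$ is regular and $F'_t$-oversaturated. Moreover, if $F=K_s$ for some $s\ge3$, then $G[K_t]$ is $F'_t$-saturated. In particular, for every $t\ge2$ and $F=K_s$ with $s\ge 3$, $\liminf_{n\to\infty}\frac{\mathrm{rsat}(n,F'_t)}{n^2}=0$.
   Context: All graphs are finite and simple. For graphs $G,H$, the blow-up $G[H]$ is obtained by replacing each vertex of $G$ by a copy of $H$ and, for every edge $uv$ of $G$, adding all edges between the copies corresponding to $u$ and $v$. $K_t$ is the complete graph on $t$ vertices. A graph $G$ is $F$-saturated if it contains no copy of $F$ but adding any non-edge creates a copy of $F$; $G$ is $F$-oversaturated if adding any non-edge $e$ creates a copy of $F$ containing $e$ ($G$ need not be $F$-free). $\mathrm{rsat}(n,F)$ is the smallest number of edges of a regular $n$-vertex $F$-saturated graph, the $\liminf$ being over $n$ for which it is defined. A graph is edge-transitive if its automorphism group acts transitively on its edges. *)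

theory Defs
  imports Complex_Main "HOL-Library.Liminf_Limsup" "HOL-Library.Extended_Real"
begin

type_synonym 'a graph = "'a set \<times> 'a set set"

definition verts :: "'a graph \<Rightarrow> 'a set" where "verts G = fst G"
definition edges :: "'a graph \<Rightarrow> 'a set set" where "edges G = snd G"

definition wf_graph :: "'a graph \<Rightarrow> bool" where
  "wf_graph G \<longleftrightarrow> finite (verts G) \<and>
     (\<forall>e\<in>edges G. \<exists>u v. e = {u, v} \<and> u \<noteq> v \<and> u \<in> verts G \<and> v \<in> verts G)"

definition adj :: "'a graph \<Rightarrow> 'a \<Rightarrow> 'a \<Rightarrow> bool" where
  "adj G u v \<longleftrightarrow> u \<noteq> v \<and> {u, v} \<in> edges G"

definition degree :: "'a graph \<Rightarrow> 'a \<Rightarrow> nat" where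
  "degree G v = card {u \<in> verts G. adj G v u}"

definition regular :: "'a graph \<Rightarrow> bool" where
  "regular G \<longleftrightarrow> (\<exists>d. \<forall>v\<in>verts G. degree G v = d)"

definition nonedges :: "'a graph \<Rightarrow> 'a set set" where
  "nonedges G = {{u, v} | u v. u \<in> verts G \<and> v \<in> verts G \<and> u \<noteq> v \<and> {u, v} \<notin> edges G}"

definition add_edge :: "'a graph \<Rightarrow> 'a set \<Rightarrow> 'a graph" where
  "add_edge G e = (verts G, insert e (edges G))"

definition delete_edge :: "'a graph \<Rightarrow> 'a set \<Rightarrow> 'a graph" where
  "delete_edge G e = (verts G, edges G - {e})"

definition complete_graph :: "nat \<Rightarrow> nat graph" where
  "complete_graph t = ({0..<t}, {{i, j} | i j. i < t \<and> j < t \<and> i \<noteq> j})"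

definition is_complete :: "'a graph \<Rightarrow> bool" where
  "is_complete G \<longleftrightarrow> (\<forall>u\<in>verts G. \<forall>v\<in>verts G. u \<noteq> v \<longrightarrow> {u, v} \<in> edges G)"

definition blowup :: "'a graph \<Rightarrow> 'b graph \<Rightarrow> ('a \<times> 'b) graph" where
  "blowup G H = (verts G \<times> verts H,
     {{(u, a), (v, b)} | u v a b. u \<in> verts G \<and> v \<in> verts G \<and> a \<in> verts H \<and> b \<in> verts H \<and>
        ((u = v \<and> {a, b} \<in> edges H) \<or> (u \<noteq> v \<and> {u, v} \<in> edges G))})"

definition embedding :: "('b \<Rightarrow> 'a) \<Rightarrow> 'b graph \<Rightarrow> 'a graph \<Rightarrow> bool" where
  "embedding f H G \<longleftrightarrow> inj_on f (verts H) \<and> f ` verts H \<subseteq> verts G \<and>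
     (\<forall>e\<in>edges H. f ` e \<in> edges G)"

definition contains_copy :: "'a graph \<Rightarrow> 'b graph \<Rightarrow> bool" where
  "contains_copy G H \<longleftrightarrow> (\<exists>f. embedding f H G)"

definition saturated :: "'b graph \<Rightarrow> 'a graph \<Rightarrow> bool" where
  "saturated F G \<longleftrightarrow> wf_graph G \<and> \<not> contains_copy G F \<and>
     (\<forall>e\<in>nonedges G. contains_copy (add_edge G e) F)"

definition oversaturated :: "'b graph \<Rightarrow> 'a graph \<Rightarrow> bool" where
  "oversaturated F G \<longleftrightarrow> wf_graph G \<and>
     (\<forall>e\<in>nonedges G. \<exists>f. embedding f F (add_edge G e) \<and> e \<in> (\<lambda>d. f ` d) ` edges F)"

definition automorphism :: "('a \<Rightarrow> 'a) \<Rightarrow> 'a graph \<Rightarrow> bool" where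
  "automorphism \<sigma> G \<longleftrightarrow> bij_betw \<sigma> (verts G) (verts G) \<and>
     (\<forall>u\<in>verts G. \<forall>v\<in>verts G. adj G (\<sigma> u) (\<sigma> v) \<longleftrightarrow> adj G u v)"

definition edge_transitive :: "'a graph \<Rightarrow> bool" where
  "edge_transitive G \<longleftrightarrow>
     (\<forall>e1\<in>edges G. \<forall>e2\<in>edges G. \<exists>\<sigma>. automorphism \<sigma> G \<and> \<sigma> ` e1 = e2)"

definition F'_t :: "'b graph \<Rightarrow> 'b \<Rightarrow> 'b \<Rightarrow> nat \<Rightarrow> ('b \<times> nat) graph" where
  "F'_t F x y t = add_edge (blowup (delete_edge F {x, y}) (complete_graph t)) {(x, 0), (y, 0)}"

text \<open>rsat(n,H): defined when some regular n-vertex H-saturated graph exists (every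
  n-vertex graph is isomorphic to one on {0..<n}).\<close>
definition rsat_defined :: "nat \<Rightarrow> 'b graph \<Rightarrow> bool" where
  "rsat_defined n H \<longleftrightarrow> (\<exists>G :: nat graph. verts G = {0..<n} \<and> regular G \<and> saturated H G)"

definition rsat :: "nat \<Rightarrow> 'b graph \<Rightarrow> nat" where
  "rsat n H = (LEAST m. \<exists>G :: nat graph. verts G = {0..<n} \<and> regular G \<and> saturated H G
                         \<and> card (edges G) = m)"

end

theory Submission
  imports Defs "HOL-Combinatorics.Transposition"
begin

(* A non-edge of G[K_t] joins the fibres of a non-edge uv of G. Saturation gives a copy of F in
   G + uv through uv; by edge-transitivity it maps xy onto uv, and blowing it up, with the fibres
   of x and y permuted so that (x,0) and (y,0) land on the ends of the non-edge, gives a copy of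
   F'_t through it. For F = K_s and G K_s-free, the two (s-1)t-cliques of F'_t obtained by deleting
   the fibre of x or of y must map onto full fibres over (s-1)-cliques P, Q of G sharing s-2
   vertices; the extra edge of F'_t joins the two private vertices, so P \<union> Q is an s-clique.
   Finally, the Kneser graph K(sk-1,k) is regular and K_s-saturated; its blow-up has
   N = C(sk-1,k) t vertices and degree below 2t C(sk-1-k,k), and
   C(sk-1-k,k) / C(sk-1,k) \<le> ((s-1)/s)^k, so the edge density tends to 0 with k. *)

lemma verts_pair [simp]: "verts (V, E) = V"
  and edges_pair [simp]: "edges (V, E) = E"
  by (simp_all add: verts_def edges_def)

lemma verts_add_edge [simp]: "verts (add_edge G e) = verts G"
  and edges_add_edge [simp]: "edges (add_edge G e) = insert e (edges G)"
  and verts_delete_edge [simp]: "verts (delete_edge G e) = verts G"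
  and edges_delete_edge [simp]: "edges (delete_edge G e) = edges G - {e}"
  by (simp_all add: add_edge_def delete_edge_def)

lemma wf_graph_edgeE:
  assumes "wf_graph G" "e \<in> edges G"
  obtains u v where "e = {u, v}" "u \<noteq> v" "u \<in> verts G" "v \<in> verts G"
  using assms by (auto simp: wf_graph_def)

lemma wf_graph_edge_subset: "wf_graph G \<Longrightarrow> e \<in> edges G \<Longrightarrow> e \<subseteq> verts G"
  by (auto elim: wf_graph_edgeE)

lemma wf_graph_edge_neq: "wf_graph G \<Longrightarrow> {u, v} \<in> edges G \<Longrightarrow> u \<noteq> v"
  by (auto simp: doubleton_eq_iff elim: wf_graph_edgeE)

section \<open>Complete graphs and blow-ups\<close>

lemma verts_complete_graph [simp]: "verts (complete_graph t) = {0..<t}"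
  by (simp add: complete_graph_def)

lemma edge_complete_graph_iff: "{a, b} \<in> edges (complete_graph t) \<longleftrightarrow> a < t \<and> b < t \<and> a \<noteq> b"
  by (auto simp: complete_graph_def doubleton_eq_iff)

lemma wf_graph_complete_graph: "wf_graph (complete_graph t)"
  by (auto simp: wf_graph_def complete_graph_def)

lemma is_complete_complete_graph: "is_complete (complete_graph t)"
  by (auto simp: is_complete_def edge_complete_graph_iff)

lemma degree_complete_graph: "a < t \<Longrightarrow> degree (complete_graph t) a = t - 1"
proof -
  assume "a < t"
  then have "{b \<in> verts (complete_graph t). adj (complete_graph t) a b} = {0..<t} - {a}"
    by (auto simp: adj_def edge_complete_graph_iff)
  with \<open>a < t\<close> show ?thesis
    by (simp add: degree_def)
qed

lemma automorphism_complete_graph: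
  assumes "bij_betw \<sigma> {0..<t} {0..<t}"
  shows "automorphism \<sigma> (complete_graph t)"
  unfolding automorphism_def
proof (intro conjI ballI)
  show "bij_betw \<sigma> (verts (complete_graph t)) (verts (complete_graph t))"
    using assms by simp
  fix u v assume "u \<in> verts (complete_graph t)" "v \<in> verts (complete_graph t)"
  moreover from this have "\<sigma> u < t" "\<sigma> v < t" "\<sigma> u = \<sigma> v \<longleftrightarrow> u = v"
    using assms by (auto simp: bij_betw_def inj_on_eq_iff)
  ultimately show "adj (complete_graph t) (\<sigma> u) (\<sigma> v) \<longleftrightarrow> adj (complete_graph t) u v"
    by (simp add: adj_def edge_complete_graph_iff)
qed

lemma edge_transitive_complete_graph: "edge_transitive (complete_graph t)"
  unfolding edge_transitive_def
proof (intro ballI)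
  fix e1 e2 assume "e1 \<in> edges (complete_graph t)" "e2 \<in> edges (complete_graph t)"
  then obtain a b c d where e: "e1 = {a, b}" "e2 = {c, d}" "a < t" "b < t" "c < t" "d < t"
    "a \<noteq> b" "c \<noteq> d"
    by (auto simp: complete_graph_def)
  define b' where "b' = transpose a c b"
  define \<sigma> where "\<sigma> = transpose b' d \<circ> transpose a c"
  have "b' < t" "b' \<noteq> c"
    using e by (auto simp: b'_def transpose_def)
  then have "bij_betw (transpose a c) {0..<t} {0..<t}" "bij_betw (transpose b' d) {0..<t} {0..<t}"
    using e by simp_all
  then have "bij_betw \<sigma> {0..<t} {0..<t}"
    unfolding \<sigma>_def by (rule bij_betw_trans)
  moreover have "\<sigma> ` e1 = e2"
    using \<open>b' \<noteq> c\<close> e by (auto simp: \<sigma>_def b'_def transpose_def)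
  ultimately show "\<exists>\<sigma>. automorphism \<sigma> (complete_graph t) \<and> \<sigma> ` e1 = e2"
    using automorphism_complete_graph by blast
qed

lemma regular_complete_graph: "regular (complete_graph t)"
  by (auto simp: regular_def degree_complete_graph)

lemma verts_blowup [simp]: "verts (blowup G H) = verts G \<times> verts H"
  by (simp add: blowup_def)

lemma edges_blowupE:
  assumes "e \<in> edges (blowup G H)"
  obtains u a v b where "e = {(u, a), (v, b)}" "u \<in> verts G" "v \<in> verts G" "a \<in> verts H"
    "b \<in> verts H" "u = v \<and> {a, b} \<in> edges H \<or> u \<noteq> v \<and> {u, v} \<in> edges G"
  using assms by (auto simp: blowup_def)

lemma edge_blowup_iff:
  "{(u, a), (v, b)} \<in> edges (blowup G H) \<longleftrightarrow>
     u \<in> verts G \<and> v \<in> verts G \<and> a \<in> verts H \<and> b \<in> verts H \<and>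
     (u = v \<and> {a, b} \<in> edges H \<or> u \<noteq> v \<and> {u, v} \<in> edges G)"
proof
  assume "{(u, a), (v, b)} \<in> edges (blowup G H)"
  then show "u \<in> verts G \<and> v \<in> verts G \<and> a \<in> verts H \<and> b \<in> verts H \<and>
     (u = v \<and> {a, b} \<in> edges H \<or> u \<noteq> v \<and> {u, v} \<in> edges G)"
    by (elim edges_blowupE) (auto simp: doubleton_eq_iff insert_commute)
qed (auto simp: blowup_def)

lemma adj_blowup_iff:
  "adj (blowup G H) (u, a) (v, b) \<longleftrightarrow>
     u \<in> verts G \<and> v \<in> verts G \<and> a \<in> verts H \<and> b \<in> verts H \<and> (u = v \<and> adj H a b \<or> adj G u v)"
  by (auto simp: adj_def edge_blowup_iff)

lemma wf_graph_blowup: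
  assumes "wf_graph G" "wf_graph H"
  shows "wf_graph (blowup G H)"
  unfolding wf_graph_def
proof (intro conjI ballI)
  show "finite (verts (blowup G H))"
    using assms by (simp add: wf_graph_def)
  fix e assume "e \<in> edges (blowup G H)"
  then obtain u a v b where e: "e = {(u, a), (v, b)}" "u \<in> verts G" "v \<in> verts G" "a \<in> verts H"
    "b \<in> verts H" "u = v \<and> {a, b} \<in> edges H \<or> u \<noteq> v \<and> {u, v} \<in> edges G"
    by (elim edges_blowupE)
  then have "(u, a) \<noteq> (v, b)"
    using wf_graph_edge_neq[OF assms(2)] by auto
  with e show "\<exists>p q. e = {p, q} \<and> p \<noteq> q \<and> p \<in> verts (blowup G H) \<and> q \<in> verts (blowup G H)"
    by (intro exI[of _ "(u, a)"] exI[of _ "(v, b)"]) auto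
qed

lemma degree_blowup:
  assumes "finite (verts G)" "finite (verts H)" "u \<in> verts G" "a \<in> verts H"
  shows "degree (blowup G H) (u, a) = degree H a + card (verts H) * degree G u"
proof -
  have "{p \<in> verts (blowup G H). adj (blowup G H) (u, a) p} =
      {u} \<times> {b \<in> verts H. adj H a b} \<union> {v \<in> verts G. adj G u v} \<times> verts H"
    using assms by (auto simp: adj_blowup_iff)
  moreover have "card ({u} \<times> {b \<in> verts H. adj H a b} \<union> {v \<in> verts G. adj G u v} \<times> verts H) =
      card ({u} \<times> {b \<in> verts H. adj H a b}) + card ({v \<in> verts G. adj G u v} \<times> verts H)"
    using assms by (intro card_Un_disjoint) (auto simp: adj_def)
  ultimately show ?thesis
    by (simp add: degree_def card_cartesian_product)
qed

lemma regular_blowup: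
  assumes "wf_graph G" "wf_graph H" "regular G" "regular H"
  shows "regular (blowup G H)"
proof -
  obtain d d' where "\<forall>u\<in>verts G. degree G u = d" "\<forall>a\<in>verts H. degree H a = d'"
    using assms(3,4) by (auto simp: regular_def)
  then show ?thesis
    using assms(1,2) unfolding regular_def
    by (intro exI[of _ "d' + card (verts H) * d"]) (auto simp: wf_graph_def degree_blowup)
qed

lemma nonedge_blowup_completeE:
  assumes "is_complete H" "e \<in> nonedges (blowup G H)"
  obtains u a v b where "e = {(u, a), (v, b)}" "{u, v} \<in> nonedges G" "a \<in> verts H" "b \<in> verts H"
proof -
  obtain u a v b where uv: "e = {(u, a), (v, b)}" "u \<in> verts G" "v \<in> verts G" "a \<in> verts H"
    "b \<in> verts H" "(u, a) \<noteq> (v, b)" "{(u, a), (v, b)} \<notin> edges (blowup G H)"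
    using assms(2) by (auto simp: nonedges_def)
  then have "{u, v} \<in> nonedges G"
    using assms(1) by (auto simp: nonedges_def edge_blowup_iff is_complete_def)
  with uv that show ?thesis
    by blast
qed

section \<open>Embeddings and oversaturation of the blow-up\<close>

lemma embedding_comp:
  assumes "embedding f H G" "embedding g G K"
  shows "embedding (g \<circ> f) H K"
  unfolding embedding_def
proof (intro conjI ballI)
  show "inj_on (g \<circ> f) (verts H)"
    using assms by (auto simp: embedding_def intro: comp_inj_on inj_on_subset)
  show "(g \<circ> f) ` verts H \<subseteq> verts K"
    using assms by (auto simp: embedding_def)
  fix e assume "e \<in> edges H"
  then have "g ` f ` e \<in> edges K"
    using assms by (simp add: embedding_def)
  then show "(g \<circ> f) ` e \<in> edges K"
    by (simp add: image_comp)
qed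

lemma embedding_automorphism:
  assumes "wf_graph G" "automorphism \<sigma> G"
  shows "embedding \<sigma> G G"
  unfolding embedding_def
proof (intro conjI ballI)
  show "inj_on \<sigma> (verts G)" "\<sigma> ` verts G \<subseteq> verts G"
    using assms(2) by (auto simp: automorphism_def bij_betw_def)
  fix e assume "e \<in> edges G"
  then obtain u v where "e = {u, v}" "u \<in> verts G" "v \<in> verts G" "adj G u v"
    using assms(1) by (auto simp: adj_def elim: wf_graph_edgeE)
  then show "\<sigma> ` e \<in> edges G"
    using assms(2) by (auto simp: automorphism_def adj_def)
qed

lemma embedding_add_edge: "embedding f H G \<Longrightarrow> embedding f (add_edge H d) (add_edge G (f ` d))"
  by (auto simp: embedding_def)

lemma embedding_delete_edge:
  assumes "wf_graph H" "embedding f H (add_edge G (f ` d))" "d \<subseteq> verts H"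
  shows "embedding f (delete_edge H d) G"
  unfolding embedding_def
proof (intro conjI ballI)
  show "inj_on f (verts (delete_edge H d))" "f ` verts (delete_edge H d) \<subseteq> verts G"
    using assms(2) by (auto simp: embedding_def)
  fix e assume e: "e \<in> edges (delete_edge H d)"
  then have "f ` e \<in> insert (f ` d) (edges G)"
    using assms(2) by (auto simp: embedding_def)
  moreover have "f ` e \<noteq> f ` d"
    using e assms inj_on_image_eq_iff[of f "verts H" e d] wf_graph_edge_subset[OF assms(1)]
    by (auto simp: embedding_def)
  ultimately show "f ` e \<in> edges G"
    by simp
qed

lemma embedding_blowup:
  assumes "embedding f H G" "wf_graph K" "\<And>w. w \<in> verts H \<Longrightarrow> automorphism (\<pi> w) K"
  shows "embedding (\<lambda>(w, i). (f w, \<pi> w i)) (blowup H K) (blowup G K)"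
proof -
  have \<pi>: "\<pi> w i \<in> verts K" "\<pi> w i = \<pi> w j \<longleftrightarrow> i = j" "adj K (\<pi> w i) (\<pi> w j) \<longleftrightarrow> adj K i j"
    if "w \<in> verts H" "i \<in> verts K" "j \<in> verts K" for w i j
    using assms(3)[OF that(1)] that(2,3) by (auto simp: automorphism_def bij_betw_def inj_on_def)
  have f: "inj_on f (verts H)" "f ` verts H \<subseteq> verts G" "\<And>e. e \<in> edges H \<Longrightarrow> f ` e \<in> edges G"
    using assms(1) by (auto simp: embedding_def)
  show ?thesis
    unfolding embedding_def
  proof (intro conjI ballI)
    show "inj_on (\<lambda>(w, i). (f w, \<pi> w i)) (verts (blowup H K))"
      using f(1) \<pi>(2) by (auto simp: inj_on_def)
    show "(\<lambda>(w, i). (f w, \<pi> w i)) ` verts (blowup H K) \<subseteq> verts (blowup G K)"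
      using f(2) \<pi>(1) by auto
    fix e assume "e \<in> edges (blowup H K)"
    then obtain w i w' j where e: "e = {(w, i), (w', j)}" "w \<in> verts H" "w' \<in> verts H"
      "i \<in> verts K" "j \<in> verts K" "w = w' \<and> {i, j} \<in> edges K \<or> w \<noteq> w' \<and> {w, w'} \<in> edges H"
      by (elim edges_blowupE)
    from e(6) show "(\<lambda>(w, i). (f w, \<pi> w i)) ` e \<in> edges (blowup G K)"
    proof
      assume "w = w' \<and> {i, j} \<in> edges K"
      then have "w = w'" "{\<pi> w i, \<pi> w j} \<in> edges K"
        using \<pi>(3)[OF e(2,4,5)] wf_graph_edge_neq[OF assms(2)] by (auto simp: adj_def)
      then show ?thesis
        using e f(2) \<pi>(1) by (auto simp: edge_blowup_iff)
    next
      assume ww': "w \<noteq> w' \<and> {w, w'} \<in> edges H"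
      then have "f ` {w, w'} \<in> edges G"
        by (intro f(3)) simp
      moreover have "f w \<noteq> f w'"
        using ww' e(2,3) f(1) by (auto dest: inj_onD)
      ultimately show ?thesis
        using e f(2) \<pi>(1) by (auto simp: edge_blowup_iff)
    qed
  qed
qed

lemma saturated_copy_uses_new_edge:
  assumes "saturated F G" "e \<in> nonedges G"
  shows "\<exists>\<phi>. embedding \<phi> F (add_edge G e) \<and> e \<in> (\<lambda>d. \<phi> ` d) ` edges F"
proof -
  obtain \<phi> where \<phi>: "embedding \<phi> F (add_edge G e)"
    using assms unfolding saturated_def contains_copy_def by blast
  moreover have "\<not> embedding \<phi> F G"
    using assms(1) unfolding saturated_def contains_copy_def by blast
  ultimately obtain d where "d \<in> edges F" "\<phi> ` d \<notin> edges G"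
    unfolding embedding_def by auto
  moreover from this \<phi> have "\<phi> ` d = e"
    unfolding embedding_def by auto
  ultimately show ?thesis
    using \<phi> by blast
qed

lemma edge_transitive_saturated_copy_at:
  assumes "wf_graph F" "edge_transitive F" "{x, y} \<in> edges F" "saturated F G" "e \<in> nonedges G"
  shows "\<exists>\<psi>. embedding \<psi> F (add_edge G e) \<and> e = {\<psi> x, \<psi> y}"
proof -
  obtain \<phi> d where \<phi>: "embedding \<phi> F (add_edge G e)" "d \<in> edges F" "e = \<phi> ` d"
    using saturated_copy_uses_new_edge[OF assms(4,5)] by blast
  obtain \<sigma> where \<sigma>: "automorphism \<sigma> F" "\<sigma> ` {x, y} = d"
    using assms(2,3) \<phi>(2) unfolding edge_transitive_def by blast
  have "embedding (\<phi> \<circ> \<sigma>) F (add_edge G e)"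
    using embedding_automorphism[OF assms(1) \<sigma>(1)] \<phi>(1) by (rule embedding_comp)
  moreover have "e = {(\<phi> \<circ> \<sigma>) x, (\<phi> \<circ> \<sigma>) y}"
    using \<phi>(3) \<sigma>(2) by auto
  ultimately show ?thesis
    by blast
qed

lemma verts_F'_t [simp]: "verts (F'_t F x y t) = verts F \<times> {0..<t}"
  by (simp add: F'_t_def)

lemma edges_F'_t:
  "edges (F'_t F x y t) =
     insert {(x, 0), (y, 0)} (edges (blowup (delete_edge F {x, y}) (complete_graph t)))"
  by (simp add: F'_t_def)

lemma oversaturated_blowup_F'_t:
  assumes "wf_graph F" "edge_transitive F" "{x, y} \<in> edges F" "saturated F G"
  shows "oversaturated (F'_t F x y t) (blowup G (complete_graph t))"
  unfolding oversaturated_def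
proof (intro conjI ballI)
  show "wf_graph (blowup G (complete_graph t))"
    by (rule wf_graph_blowup) (use assms(4) in \<open>auto simp: saturated_def wf_graph_complete_graph\<close>)
  fix e assume "e \<in> nonedges (blowup G (complete_graph t))"
  then obtain u a v b where e: "e = {(u, a), (v, b)}" "{u, v} \<in> nonedges G" "a < t" "b < t"
    by (auto elim: nonedge_blowup_completeE[OF is_complete_complete_graph])
  obtain \<psi> where \<psi>: "embedding \<psi> F (add_edge G {u, v})" "{u, v} = {\<psi> x, \<psi> y}"
    using edge_transitive_saturated_copy_at[OF assms e(2)] by blast
  have "\<exists>a' b'. e = {(\<psi> x, a'), (\<psi> y, b')} \<and> a' < t \<and> b' < t"
    using e(1,3,4) \<psi>(2) by (auto simp: doubleton_eq_iff insert_commute)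
  then obtain a' b' where ab: "e = {(\<psi> x, a'), (\<psi> y, b')}" "a' < t" "b' < t"
    by blast
  have xy: "{x, y} \<subseteq> verts F" "x \<noteq> y"
    using wf_graph_edge_subset[OF assms(1,3)] wf_graph_edge_neq[OF assms(1,3)] by simp_all
  have \<psi>': "embedding \<psi> (delete_edge F {x, y}) G"
    using embedding_delete_edge[OF assms(1) _ xy(1)] \<psi> by simp
  define \<pi> where "\<pi> w = (if w = x then transpose 0 a' else if w = y then transpose 0 b' else id)" for w
  define f where "f = (\<lambda>(w, i). (\<psi> w, \<pi> w i))"
  have "\<And>w. automorphism (\<pi> w) (complete_graph t)"
    using ab by (auto simp: \<pi>_def intro!: automorphism_complete_graph)
  then have "embedding f (blowup (delete_edge F {x, y}) (complete_graph t)) (blowup G (complete_graph t))"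
    unfolding f_def by (rule embedding_blowup[OF \<psi>' wf_graph_complete_graph])
  then have "embedding f (F'_t F x y t) (add_edge (blowup G (complete_graph t)) (f ` {(x, 0), (y, 0)}))"
    unfolding F'_t_def by (rule embedding_add_edge)
  moreover have "f ` {(x, 0), (y, 0)} = e"
    using ab xy(2) by (simp add: f_def \<pi>_def)
  moreover have "{(x, 0), (y, 0)} \<in> edges (F'_t F x y t)"
    by (simp add: edges_F'_t)
  ultimately show "\<exists>f. embedding f (F'_t F x y t) (add_edge (blowup G (complete_graph t)) e) \<and>
      e \<in> (\<lambda>d. f ` d) ` edges (F'_t F x y t)"
    by blast
qed

section \<open>Cliques and saturation of the blow-up of a K_s-saturated graph\<close>

definition clique :: "'a graph \<Rightarrow> 'a set \<Rightarrow> bool" where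
  "clique G C \<longleftrightarrow> C \<subseteq> verts G \<and> (\<forall>u\<in>C. \<forall>v\<in>C. u \<noteq> v \<longrightarrow> {u, v} \<in> edges G)"

lemma clique_image_embedding:
  assumes "clique H S" "embedding f H G"
  shows "clique G (f ` S)"
  unfolding clique_def
proof (intro conjI ballI impI)
  show "f ` S \<subseteq> verts G"
    using assms unfolding clique_def embedding_def by blast
  fix a b assume "a \<in> f ` S" "b \<in> f ` S" "a \<noteq> b"
  then obtain p q where pq: "p \<in> S" "q \<in> S" "p \<noteq> q" "a = f p" "b = f q"
    by auto
  then have "{p, q} \<in> edges H"
    using assms(1) unfolding clique_def by blast
  then have "f ` {p, q} \<in> edges G"
    using assms(2) unfolding embedding_def by blast
  with pq show "{a, b} \<in> edges G"
    by simp
qed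

lemma contains_copy_if_clique:
  assumes "wf_graph F" "clique G C" "finite C" "card C = card (verts F)"
  shows "contains_copy G F"
proof -
  obtain h where h: "bij_betw h (verts F) C"
    using assms(1,3,4) finite_same_card_bij[of "verts F" C] by (auto simp: wf_graph_def)
  have "embedding h F G"
    unfolding embedding_def
  proof (intro conjI ballI)
    show "inj_on h (verts F)" "h ` verts F \<subseteq> verts G"
      using h assms(2) by (auto simp: bij_betw_def clique_def)
    fix e assume "e \<in> edges F"
    then obtain p q where "e = {p, q}" "p \<noteq> q" "p \<in> verts F" "q \<in> verts F"
      using assms(1) by (elim wf_graph_edgeE)
    then show "h ` e \<in> edges G"
      using h assms(2) by (auto simp: bij_betw_def clique_def inj_on_eq_iff)
  qed
  then show ?thesis
    by (auto simp: contains_copy_def)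
qed

lemma card_clique_less:
  assumes "wf_graph F" "\<not> contains_copy G F" "clique G C"
  shows "card C < card (verts F)"
proof (rule ccontr)
  assume "\<not> card C < card (verts F)"
  then obtain D where "D \<subseteq> C" "card D = card (verts F)" "finite D"
    by (meson not_less obtain_subset_with_card_n)
  moreover from this have "clique G D"
    using assms(3) by (auto simp: clique_def)
  ultimately show False
    using contains_copy_if_clique[OF assms(1)] assms(2) by blast
qed

lemma clique_fst_blowup:
  assumes "clique (blowup G H) K"
  shows "clique G (fst ` K)"
  unfolding clique_def
proof (intro conjI ballI impI)
  show "fst ` K \<subseteq> verts G"
    using assms by (auto simp: clique_def)
  fix u v assume "u \<in> fst ` K" "v \<in> fst ` K" "u \<noteq> v"
  then obtain a b where "(u, a) \<in> K" "(v, b) \<in> K" "u \<noteq> v"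
    by force
  then have "{(u, a), (v, b)} \<in> edges (blowup G H)"
    using assms unfolding clique_def by blast
  with \<open>u \<noteq> v\<close> show "{u, v} \<in> edges G"
    by (simp add: edge_blowup_iff)
qed

lemma clique_blowup_full_fibres:
  assumes "finite (verts G)" "finite (verts H)" "verts H \<noteq> {}"
    and "\<And>C. clique G C \<Longrightarrow> card C \<le> m"
    and "clique (blowup G H) W" "card W = m * card (verts H)"
  shows "W = fst ` W \<times> verts H \<and> card (fst ` W) = m \<and> clique G (fst ` W)"
proof -
  have clique: "clique G (fst ` W)"
    using assms(5) by (rule clique_fst_blowup)
  have sub: "W \<subseteq> fst ` W \<times> verts H"
    using assms(5) by (force simp: clique_def)
  have fin: "finite (fst ` W \<times> verts H)"
    using clique assms(1,2) by (auto simp: clique_def intro: finite_subset)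
  have "m * card (verts H) \<le> card (fst ` W) * card (verts H)"
    using card_mono[OF fin sub] assms(6) by (simp add: card_cartesian_product)
  then have "card (fst ` W) = m"
    using assms(2,3) assms(4)[OF clique] by (simp add: card_gt_0_iff)
  moreover from this have "W = fst ` W \<times> verts H"
    using card_subset_eq[OF fin sub] assms(6) by (simp add: card_cartesian_product)
  ultimately show ?thesis
    using clique by blast
qed

lemma clique_Un_overlapping:
  assumes "clique G P" "clique G Q" "finite P" "finite Q"
    and "card P = Suc m" "card Q = Suc m" "m \<le> card (P \<inter> Q)"
    and "a \<in> P - Q" "b \<in> Q - P" "{a, b} \<in> edges G"
  shows "clique G (P \<union> Q) \<and> card (P \<union> Q) = Suc (Suc m)"
proof -
  have "card (P - Q) = card P - card (P \<inter> Q)" "card (Q - P) = card Q - card (P \<inter> Q)"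
    using assms(3,4) card_Diff_subset_Int[of Q P] by (simp_all add: card_Diff_subset_Int Int_commute)
  then have "card (P - Q) \<le> Suc 0" "card (Q - P) \<le> Suc 0"
    using assms(5-7) by simp_all
  then have "P - Q = {a}" "Q - P = {b}"
    using assms(3,4,8,9) card_le_Suc0_iff_eq[of "P - Q"] card_le_Suc0_iff_eq[of "Q - P"] by blast+
  have "{u, v} \<in> edges G" if "u \<in> P \<union> Q" "v \<in> P \<union> Q" "u \<noteq> v" for u v
  proof (cases "u \<in> P \<and> v \<in> P \<or> u \<in> Q \<and> v \<in> Q")
    case True
    then show ?thesis
      using assms(1,2) that(3) unfolding clique_def by blast
  next
    case False
    then have "u \<in> P - Q \<and> v \<in> Q - P \<or> u \<in> Q - P \<and> v \<in> P - Q"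
      using that(1,2) by blast
    then have "u = a \<and> v = b \<or> u = b \<and> v = a"
      unfolding \<open>P - Q = {a}\<close> \<open>Q - P = {b}\<close> by blast
    then show ?thesis
      using assms(10) by (auto simp: insert_commute)
  qed
  then have "clique G (P \<union> Q)"
    using assms(1,2) unfolding clique_def by blast
  moreover have "P \<union> Q = insert b P" "b \<notin> P"
    using \<open>Q - P = {b}\<close> by auto
  ultimately show ?thesis
    using assms(3,5) by simp
qed

lemma clique_F'_t_side:
  assumes "is_complete F" "z \<in> {x, y}"
  shows "clique (F'_t F x y t) ((verts F - {z}) \<times> {0..<t})"
  unfolding clique_def
proof (intro conjI ballI impI)
  show "(verts F - {z}) \<times> {0..<t} \<subseteq> verts (F'_t F x y t)"
    by auto
  fix p q assume "p \<in> (verts F - {z}) \<times> {0..<t}" "q \<in> (verts F - {z}) \<times> {0..<t}" "p \<noteq> q"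
  moreover obtain w i w' j where "p = (w, i)" "q = (w', j)"
    by fastforce
  moreover have "{w, w'} \<noteq> {x, y}" if "w \<noteq> z" "w' \<noteq> z"
    using that assms(2) by (auto simp: doubleton_eq_iff)
  ultimately show "{p, q} \<in> edges (F'_t F x y t)"
    using assms(1)
    by (auto simp: edges_F'_t edge_blowup_iff edge_complete_graph_iff is_complete_def)
qed

lemma F'_t_embedding_side_fibres:
  assumes "wf_graph F" "is_complete F" "finite (verts G)" "0 < t"
    and "\<And>C. clique G C \<Longrightarrow> card C < card (verts F)"
    and "embedding f (F'_t F x y t) (blowup G (complete_graph t))" "z \<in> {x, y}" "z \<in> verts F"
  shows "\<exists>P. f ` ((verts F - {z}) \<times> {0..<t}) = P \<times> {0..<t} \<and> card P = card (verts F) - 1 \<and>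
    clique G P"
proof -
  define W where "W = f ` ((verts F - {z}) \<times> {0..<t})"
  have "clique (blowup G (complete_graph t)) W"
    unfolding W_def using clique_F'_t_side[OF assms(2,7)] assms(6) by (rule clique_image_embedding)
  moreover have "card W = (card (verts F) - 1) * card (verts (complete_graph t))"
  proof -
    have "inj_on f ((verts F - {z}) \<times> {0..<t})"
      using assms(6) by (auto simp: embedding_def intro: inj_on_subset)
    then show ?thesis
      using assms(1,8) by (simp add: W_def card_image card_cartesian_product wf_graph_def)
  qed
  moreover have "\<And>C. clique G C \<Longrightarrow> card C \<le> card (verts F) - 1"
    using assms(5) by fastforce
  ultimately show ?thesis
    using clique_blowup_full_fibres[of G "complete_graph t" "card (verts F) - 1" W] assms(3,4)
    by (auto simp: W_def)
qed

lemma card_Int_ge_of_fibre_images: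
  assumes "inj_on f (V \<times> T)" "finite V" "finite T" "T \<noteq> {}" "finite P" "finite Q"
    and "x \<in> V" "y \<in> V" "x \<noteq> y"
    and "f ` ((V - {y}) \<times> T) = P \<times> T" "f ` ((V - {x}) \<times> T) = Q \<times> T"
  shows "card V - 2 \<le> card (P \<inter> Q)"
proof -
  define R where "R = (V - {x, y}) \<times> T"
  have "f ` R \<subseteq> P \<times> T \<inter> Q \<times> T"
    unfolding R_def assms(10,11)[symmetric] by blast
  then have "card (f ` R) \<le> card (P \<inter> Q) * card T"
    using card_mono[of "(P \<inter> Q) \<times> T" "f ` R"] assms(3,5)
    by (simp add: Times_Int_Times card_cartesian_product)
  moreover have "card (f ` R) = (card V - 2) * card T"
  proof -
    have "inj_on f R"
      using assms(1) unfolding R_def by (rule inj_on_subset) auto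
    moreover have "card (V - {x, y}) = card V - 2"
      using assms(2,7-9) by (simp add: card_Diff_subset)
    ultimately show ?thesis
      by (simp add: R_def card_image card_cartesian_product)
  qed
  ultimately show ?thesis
    using assms(3,4) by (simp add: card_gt_0_iff)
qed

lemma blowup_not_contains_F'_t:
  assumes "wf_graph F" "is_complete F" "{x, y} \<in> edges F" "finite (verts G)" "0 < t"
    and clique_bound: "\<And>C. clique G C \<Longrightarrow> card C < card (verts F)"
  shows "\<not> contains_copy (blowup G (complete_graph t)) (F'_t F x y t)"
proof
  assume "contains_copy (blowup G (complete_graph t)) (F'_t F x y t)"
  then obtain f where f: "embedding f (F'_t F x y t) (blowup G (complete_graph t))"
    by (auto simp: contains_copy_def)
  define s where "s = card (verts F)"
  have xy: "x \<in> verts F" "y \<in> verts F" "x \<noteq> y"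
    using wf_graph_edge_subset[OF assms(1,3)] wf_graph_edge_neq[OF assms(1,3)] by simp_all
  have fin: "finite (verts F)"
    using assms(1) by (simp add: wf_graph_def)
  have "card {x, y} \<le> s"
    unfolding s_def using fin xy by (intro card_mono) auto
  then have "2 \<le> s"
    using xy(3) by simp
  have inj: "inj_on f (verts F \<times> {0..<t})"
    using f by (simp add: embedding_def)
  obtain P where P: "f ` ((verts F - {y}) \<times> {0..<t}) = P \<times> {0..<t}" "card P = s - 1" "clique G P"
    using F'_t_embedding_side_fibres[OF assms(1,2,4,5) clique_bound f _ xy(2)] by (auto simp: s_def)
  obtain Q where Q: "f ` ((verts F - {x}) \<times> {0..<t}) = Q \<times> {0..<t}" "card Q = s - 1" "clique G Q"
    using F'_t_embedding_side_fibres[OF assms(1,2,4,5) clique_bound f _ xy(1)] by (auto simp: s_def)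
  have fin_PQ: "finite P" "finite Q"
    using P(3) Q(3) assms(4) by (auto simp: clique_def intro: finite_subset)
  have "f (x, 0) \<in> P \<times> {0..<t}" "f (x, 0) \<notin> Q \<times> {0..<t}"
    "f (y, 0) \<in> Q \<times> {0..<t}" "f (y, 0) \<notin> P \<times> {0..<t}"
    unfolding P(1)[symmetric] Q(1)[symmetric] using xy assms(5)
    by (auto simp: inj_on_eq_iff[OF inj])
  then have a: "fst (f (x, 0)) \<in> P - Q" and b: "fst (f (y, 0)) \<in> Q - P"
    by (auto simp: mem_Times_iff)
  have "f ` {(x, 0), (y, 0)} \<in> edges (blowup G (complete_graph t))"
    using f by (simp add: embedding_def edges_F'_t)
  then have ab: "{fst (f (x, 0)), fst (f (y, 0))} \<in> edges G"
    using a b edge_blowup_iff[of "fst (f (x, 0))" "snd (f (x, 0))" "fst (f (y, 0))" "snd (f (y, 0))"]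
    by auto
  have "s - 2 \<le> card (P \<inter> Q)"
    using card_Int_ge_of_fibre_images[OF inj fin _ _ fin_PQ xy P(1) Q(1)] assms(5) by (simp add: s_def)
  moreover have "s - 1 = Suc (s - 2)"
    using \<open>2 \<le> s\<close> by arith
  ultimately have "clique G (P \<union> Q) \<and> card (P \<union> Q) = Suc (Suc (s - 2))"
    using clique_Un_overlapping[OF P(3) Q(3) fin_PQ _ _ _ a b ab] P(2) Q(2) by simp
  then show False
    using clique_bound[of "P \<union> Q"] \<open>2 \<le> s\<close> by (simp add: s_def)
qed

lemma saturated_blowup_F'_t:
  assumes "wf_graph F" "edge_transitive F" "is_complete F" "{x, y} \<in> edges F" "saturated F G"
    and "0 < t"
  shows "saturated (F'_t F x y t) (blowup G (complete_graph t))"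
proof -
  have "finite (verts G)" "\<not> contains_copy G F"
    using assms(5) by (auto simp: saturated_def wf_graph_def)
  then have "\<not> contains_copy (blowup G (complete_graph t)) (F'_t F x y t)"
    using blowup_not_contains_F'_t[OF assms(1,3,4) _ assms(6)] card_clique_less[OF assms(1)] by blast
  then show ?thesis
    using oversaturated_blowup_F'_t[OF assms(1,2,4,5), of t]
    by (auto simp: saturated_def oversaturated_def contains_copy_def)
qed

section \<open>Kneser graphs\<close>

definition kneser_graph :: "nat \<Rightarrow> nat \<Rightarrow> nat set graph" where
  "kneser_graph n k =
     ({A. A \<subseteq> {0..<n} \<and> card A = k},
      {{A, B} | A B. A \<subseteq> {0..<n} \<and> card A = k \<and> B \<subseteq> {0..<n} \<and> card B = k \<and> A \<inter> B = {}})"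

lemma verts_kneser_graph: "verts (kneser_graph n k) = {A. A \<subseteq> {0..<n} \<and> card A = k}"
  by (simp add: kneser_graph_def)

lemma edge_kneser_graph_iff:
  "{A, B} \<in> edges (kneser_graph n k) \<longleftrightarrow>
     A \<in> verts (kneser_graph n k) \<and> B \<in> verts (kneser_graph n k) \<and> A \<inter> B = {}"
  by (auto simp: kneser_graph_def doubleton_eq_iff)

lemma finite_verts_kneser_graph: "finite (verts (kneser_graph n k))"
  by (rule finite_subset[of _ "Pow {0..<n}"]) (auto simp: verts_kneser_graph)

lemma card_verts_kneser_graph: "card (verts (kneser_graph n k)) = n choose k"
  by (simp add: verts_kneser_graph n_subsets)

lemma wf_graph_kneser_graph:
  assumes "0 < k"
  shows "wf_graph (kneser_graph n k)"
  unfolding wf_graph_def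
proof (intro conjI ballI)
  show "finite (verts (kneser_graph n k))"
    by (rule finite_verts_kneser_graph)
  fix e assume "e \<in> edges (kneser_graph n k)"
  then obtain A B where "e = {A, B}" "A \<in> verts (kneser_graph n k)" "B \<in> verts (kneser_graph n k)"
    "A \<inter> B = {}"
    by (auto simp: kneser_graph_def)
  moreover from this have "A \<noteq> B"
    using assms by (auto simp: verts_kneser_graph)
  ultimately show "\<exists>A B. e = {A, B} \<and> A \<noteq> B \<and> A \<in> verts (kneser_graph n k) \<and>
      B \<in> verts (kneser_graph n k)"
    by blast
qed

lemma degree_kneser_graph:
  assumes "0 < k" "A \<in> verts (kneser_graph n k)"
  shows "degree (kneser_graph n k) A = (n - k) choose k"
proof -
  have "A \<noteq> {}"
    using assms by (auto simp: verts_kneser_graph)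
  then have "{B \<in> verts (kneser_graph n k). adj (kneser_graph n k) A B} =
      {B. B \<subseteq> {0..<n} - A \<and> card B = k}"
    using assms(2) by (auto simp: adj_def edge_kneser_graph_iff verts_kneser_graph)
  moreover have "card ({0..<n} - A) = n - k"
    using assms(2) by (auto simp: verts_kneser_graph card_Diff_subset finite_subset)
  ultimately show ?thesis
    by (simp add: degree_def n_subsets)
qed

lemma regular_kneser_graph: "0 < k \<Longrightarrow> regular (kneser_graph n k)"
  unfolding regular_def using degree_kneser_graph by blast

lemma clique_kneser_graph_iff:
  "clique (kneser_graph n k) \<A> \<longleftrightarrow> \<A> \<subseteq> verts (kneser_graph n k) \<and> pairwise disjnt \<A>"
  by (auto simp: clique_def pairwise_def disjnt_def edge_kneser_graph_iff)

lemma card_clique_kneser_graph: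
  assumes "clique (kneser_graph n k) \<A>"
  shows "card \<A> * k \<le> n"
proof -
  have \<A>: "\<A> \<subseteq> verts (kneser_graph n k)" "pairwise disjnt \<A>"
    using assms by (simp_all add: clique_kneser_graph_iff)
  then have "card (\<Union>\<A>) = (\<Sum>A\<in>\<A>. card A)"
    by (intro card_Union_disjoint) (auto simp: verts_kneser_graph finite_subset)
  also have "\<dots> = card \<A> * k"
    using \<A>(1) by (simp add: verts_kneser_graph subset_iff)
  finally have "card (\<Union>\<A>) = card \<A> * k" .
  moreover have "card (\<Union>\<A>) \<le> n"
    using \<A>(1) card_mono[of "{0..<n}" "\<Union>\<A>"] by (auto simp: verts_kneser_graph)
  ultimately show ?thesis
    by simp
qed

lemma kneser_graph_not_contains_complete:
  assumes "n < s * k"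
  shows "\<not> contains_copy (kneser_graph n k) (complete_graph s)"
proof
  assume "contains_copy (kneser_graph n k) (complete_graph s)"
  then obtain h where h: "embedding h (complete_graph s) (kneser_graph n k)"
    by (auto simp: contains_copy_def)
  have "clique (complete_graph s) {0..<s}"
    by (auto simp: clique_def edge_complete_graph_iff)
  then have "clique (kneser_graph n k) (h ` {0..<s})"
    using h by (rule clique_image_embedding)
  moreover have "card (h ` {0..<s}) = s"
    using h by (simp add: embedding_def card_image)
  ultimately show False
    using card_clique_kneser_graph assms by fastforce
qed

lemma exists_disjoint_subsets_card:
  assumes "finite X" "m * k \<le> card X" "0 < k"
  shows "\<exists>\<C>. card \<C> = m \<and> (\<forall>C\<in>\<C>. C \<subseteq> X \<and> card C = k) \<and> pairwise disjnt \<C>"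
  using assms(2)
proof (induction m)
  case 0
  show ?case
    by (intro exI[of _ "{}"]) simp
next
  case (Suc m)
  then obtain \<C> where \<C>: "card \<C> = m" "\<forall>C\<in>\<C>. C \<subseteq> X \<and> card C = k" "pairwise disjnt \<C>"
    by auto
  have fin: "finite \<C>" "\<forall>C\<in>\<C>. finite C"
    using \<C>(2) assms(1) by (auto intro: finite_subset[of \<C> "Pow X"] finite_subset)
  have "card (\<Union>\<C>) = m * k"
    using card_Union_disjoint[OF \<C>(3)] fin \<C>(1,2) by simp
  moreover have "\<Union>\<C> \<subseteq> X"
    using \<C>(2) by blast
  ultimately have "k \<le> card (X - \<Union>\<C>)"
    using Suc.prems assms(1) by (simp add: card_Diff_subset finite_subset)
  then obtain D where D: "D \<subseteq> X - \<Union>\<C>" "card D = k"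
    by (meson obtain_subset_with_card_n)
  moreover from this have "D \<noteq> {}"
    using assms(3) by auto
  ultimately have "D \<notin> \<C>" "\<forall>C\<in>\<C>. disjnt D C"
    by (auto simp: disjnt_def)
  with \<C> D fin(1) show ?case
    by (intro exI[of _ "insert D \<C>"]) (auto simp: pairwise_insert disjnt_sym)
qed

lemma kneser_graph_add_edge_contains_complete:
  assumes "0 < k" "2 \<le> s" "s * k \<le> Suc n" "e \<in> nonedges (kneser_graph n k)"
  shows "contains_copy (add_edge (kneser_graph n k) e) (complete_graph s)"
proof -
  obtain A B where AB: "e = {A, B}" "A \<in> verts (kneser_graph n k)" "B \<in> verts (kneser_graph n k)"
    "A \<noteq> B" "A \<inter> B \<noteq> {}"
    using assms(4) by (auto simp: nonedges_def edge_kneser_graph_iff)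
  then have fin: "finite A" "finite B" "card A = k" "card B = k" "A \<union> B \<subseteq> {0..<n}"
    by (auto simp: verts_kneser_graph finite_subset)
  define X where "X = {0..<n} - (A \<union> B)"
  have "card (A \<union> B) + card (A \<inter> B) = 2 * k" "0 < card (A \<inter> B)"
    using card_Un_Int[OF fin(1,2)] fin AB(5) by auto
  moreover have "card X = n - card (A \<union> B)"
    using fin by (simp add: X_def card_Diff_subset)
  ultimately have "(s - 2) * k \<le> card X"
    using assms(3) by (simp add: diff_mult_distrib)
  then obtain \<C> where \<C>: "card \<C> = s - 2" "\<forall>C\<in>\<C>. C \<subseteq> X \<and> card C = k" "pairwise disjnt \<C>"
    using exists_disjoint_subsets_card[of X "s - 2" k] assms(1) by (auto simp: X_def)
  have "clique (kneser_graph n k) (insert A \<C>)" "clique (kneser_graph n k) (insert B \<C>)"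
    using \<C>(2,3) AB(2,3) unfolding clique_kneser_graph_iff
    by (auto simp: pairwise_insert disjnt_def X_def verts_kneser_graph)
  then have clique: "clique (add_edge (kneser_graph n k) e) (insert A (insert B \<C>))"
    using AB(1) unfolding clique_def by (auto simp: insert_commute)
  have "finite \<C>"
    using \<C>(2) by (intro finite_subset[of \<C> "Pow X"]) (auto simp: X_def)
  moreover have "A \<notin> \<C>" "B \<notin> \<C>"
    using \<C>(2) AB(5) by (auto simp: X_def)
  ultimately have "finite (insert A (insert B \<C>))" "card (insert A (insert B \<C>)) = s"
    using \<C>(1) AB(4) assms(2) by auto
  then show ?thesis
    using contains_copy_if_clique[OF wf_graph_complete_graph clique, of s] by simp
qed

lemma saturated_kneser_graph:
  assumes "0 < k" "2 \<le> s"
  shows "saturated (complete_graph s) (kneser_graph (s * k - 1) k)"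
  unfolding saturated_def
  using assms wf_graph_kneser_graph kneser_graph_not_contains_complete
    kneser_graph_add_edge_contains_complete[of k s "s * k - 1"]
  by auto

section \<open>The regular saturation number of F'_t for complete F\<close>

definition relabel :: "('a \<Rightarrow> 'c) \<Rightarrow> 'a graph \<Rightarrow> 'c graph" where
  "relabel g H = (g ` verts H, (\<lambda>e. g ` e) ` edges H)"

lemma verts_relabel [simp]: "verts (relabel g H) = g ` verts H"
  and edges_relabel [simp]: "edges (relabel g H) = (\<lambda>e. g ` e) ` edges H"
  by (simp_all add: relabel_def)

lemma embedding_relabel: "inj_on g (verts H) \<Longrightarrow> embedding g H (relabel g H)"
  by (auto simp: embedding_def)

lemma embedding_inv_relabel:
  assumes "wf_graph H" "inj_on g (verts H)"
  shows "embedding (inv_into (verts H) g) (relabel g H) H"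
  unfolding embedding_def
proof (intro conjI ballI)
  show "inj_on (inv_into (verts H) g) (verts (relabel g H))"
    by (simp add: inj_on_inv_into)
  show "inv_into (verts H) g ` verts (relabel g H) \<subseteq> verts H"
    by (auto intro: inv_into_into)
  fix e assume "e \<in> edges (relabel g H)"
  then obtain d where d: "d \<in> edges H" "e = g ` d"
    by auto
  then have "inv_into (verts H) g ` e = d"
    using inv_into_image_cancel[OF assms(2) wf_graph_edge_subset[OF assms(1) d(1)]] by simp
  with d(1) show "inv_into (verts H) g ` e \<in> edges H"
    by simp
qed

lemma edge_relabel_iff:
  assumes "wf_graph H" "inj_on g (verts H)" "p \<in> verts H" "q \<in> verts H"
  shows "{g p, g q} \<in> edges (relabel g H) \<longleftrightarrow> {p, q} \<in> edges H"
proof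
  assume "{g p, g q} \<in> edges (relabel g H)"
  then obtain d where "d \<in> edges H" "g ` {p, q} = g ` d"
    by auto
  moreover from this have "{p, q} = d"
    using assms inj_on_image_eq_iff[of g "verts H" "{p, q}" d] wf_graph_edge_subset by blast
  ultimately show "{p, q} \<in> edges H"
    by simp
next
  assume "{p, q} \<in> edges H"
  then show "{g p, g q} \<in> edges (relabel g H)"
    using imageI[of "{p, q}" "edges H" "image g"] by simp
qed

lemma wf_graph_relabel:
  assumes "wf_graph H" "inj_on g (verts H)"
  shows "wf_graph (relabel g H)"
  unfolding wf_graph_def
proof (intro conjI ballI)
  show "finite (verts (relabel g H))"
    using assms(1) by (simp add: wf_graph_def)
  fix e assume "e \<in> edges (relabel g H)"
  then obtain u v where "e = {g u, g v}" "u \<noteq> v" "u \<in> verts H" "v \<in> verts H"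
    using assms(1) by (auto elim: wf_graph_edgeE)
  moreover from this have "g u \<noteq> g v"
    using assms(2) by (auto dest: inj_onD)
  ultimately show "\<exists>u v. e = {u, v} \<and> u \<noteq> v \<and> u \<in> verts (relabel g H) \<and> v \<in> verts (relabel g H)"
    by auto
qed

lemma degree_relabel:
  assumes "wf_graph H" "inj_on g (verts H)" "p \<in> verts H"
  shows "degree (relabel g H) (g p) = degree H p"
proof -
  have "{u \<in> verts (relabel g H). adj (relabel g H) (g p) u} = g ` {u \<in> verts H. adj H p u}"
    using assms edge_relabel_iff[OF assms(1,2,3)] by (auto simp: adj_def inj_on_eq_iff)
  moreover have "inj_on g {u \<in> verts H. adj H p u}"
    using assms(2) by (rule inj_on_subset) auto
  ultimately show ?thesis
    by (simp add: degree_def card_image)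
qed

lemma regular_relabel:
  "wf_graph H \<Longrightarrow> inj_on g (verts H) \<Longrightarrow> regular H \<Longrightarrow> regular (relabel g H)"
  by (auto simp: regular_def degree_relabel)

lemma card_edges_relabel:
  assumes "wf_graph H" "inj_on g (verts H)"
  shows "card (edges (relabel g H)) = card (edges H)"
proof -
  have "inj_on (\<lambda>e. g ` e) (edges H)"
    using inj_on_image_Pow[OF assms(2)] wf_graph_edge_subset[OF assms(1)] by (auto intro: inj_on_subset)
  then show ?thesis
    by (simp add: card_image)
qed

lemma saturated_relabel:
  assumes "wf_graph H" "inj_on g (verts H)" "saturated F H"
  shows "saturated F (relabel g H)"
  unfolding saturated_def
proof (intro conjI ballI)
  show "wf_graph (relabel g H)"
    using assms(1,2) by (rule wf_graph_relabel)
  show "\<not> contains_copy (relabel g H) F"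
  proof
    assume "contains_copy (relabel g H) F"
    then obtain \<phi> where "embedding \<phi> F (relabel g H)"
      unfolding contains_copy_def by blast
    then have "embedding (inv_into (verts H) g \<circ> \<phi>) F H"
      using embedding_inv_relabel[OF assms(1,2)] by (rule embedding_comp)
    then show False
      using assms(3) unfolding saturated_def contains_copy_def by blast
  qed
  fix e assume "e \<in> nonedges (relabel g H)"
  then obtain p q where pq: "e = {g p, g q}" "p \<in> verts H" "q \<in> verts H" "p \<noteq> q"
    "{g p, g q} \<notin> edges (relabel g H)"
    by (auto simp: nonedges_def)
  then have "{p, q} \<in> nonedges H"
    using edge_relabel_iff[OF assms(1,2)] by (auto simp: nonedges_def)
  then obtain \<phi> where "embedding \<phi> F (add_edge H {p, q})"
    using assms(3) by (auto simp: saturated_def contains_copy_def)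
  moreover have "embedding g (add_edge H {p, q}) (add_edge (relabel g H) e)"
    using embedding_add_edge[OF embedding_relabel[OF assms(2)], of "{p, q}"] pq(1) by simp
  ultimately show "contains_copy (add_edge (relabel g H) e) F"
    unfolding contains_copy_def by (blast intro: embedding_comp)
qed

lemma rsat_le_card_edges:
  fixes F :: "'b graph" and H :: "'a graph"
  assumes "regular H" "saturated F H" "card (verts H) = n"
  shows "rsat_defined n F \<and> rsat n F \<le> card (edges H)"
proof -
  have wf: "wf_graph H"
    using assms(2) by (simp add: saturated_def)
  then obtain g where "bij_betw g (verts H) {0..<n}"
    using ex_bij_betw_finite_nat[of "verts H"] assms(3) by (auto simp: wf_graph_def)
  then have g: "inj_on g (verts H)" "g ` verts H = {0..<n}"
    by (simp_all add: bij_betw_def)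
  let ?H = "relabel g H"
  have H: "verts ?H = {0..<n}" "regular ?H" "saturated F ?H"
    using g(2) regular_relabel[OF wf g(1) assms(1)] saturated_relabel[OF wf g(1) assms(2)] by simp_all
  then have "rsat_defined n F"
    unfolding rsat_defined_def by blast
  moreover have "rsat n F \<le> card (edges ?H)"
    unfolding rsat_def by (rule Least_le) (use H in blast)
  ultimately show ?thesis
    using card_edges_relabel[OF wf g(1)] by simp
qed

lemma card_edges_le:
  assumes "wf_graph H" "\<And>v. v \<in> verts H \<Longrightarrow> degree H v \<le> D"
  shows "card (edges H) \<le> card (verts H) * D"
proof -
  let ?N = "\<lambda>v. {u \<in> verts H. adj H v u}"
  have fin: "finite (verts H)"
    using assms(1) by (simp add: wf_graph_def)
  have "edges H \<subseteq> (\<Union>v\<in>verts H. (\<lambda>u. {v, u}) ` ?N v)"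
    using assms(1) by (auto simp: adj_def elim!: wf_graph_edgeE)
  then have "card (edges H) \<le> card (\<Union>v\<in>verts H. (\<lambda>u. {v, u}) ` ?N v)"
    using fin by (intro card_mono) auto
  also have "\<dots> \<le> (\<Sum>v\<in>verts H. card ((\<lambda>u. {v, u}) ` ?N v))"
    using fin by (rule card_UN_le)
  also have "\<dots> \<le> (\<Sum>v\<in>verts H. D)"
  proof (rule sum_mono)
    fix v assume "v \<in> verts H"
    have "card ((\<lambda>u. {v, u}) ` ?N v) \<le> card (?N v)"
      using fin by (intro card_image_le) auto
    also have "\<dots> \<le> D"
      using assms(2)[OF \<open>v \<in> verts H\<close>] by (simp add: degree_def)
    finally show "card ((\<lambda>u. {v, u}) ` ?N v) \<le> D" .
  qed
  finally show ?thesis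
    by simp
qed

lemma binomial_pred_mult_le:
  fixes m k s :: nat
  assumes "0 < m" "m \<le> s * k"
  shows "((m - 1) choose k) * s \<le> (m choose k) * (s - 1)"
proof -
  have "(m - k) * s \<le> (s - 1) * m"
  proof (cases "k \<le> m")
    case True
    have "(m - k) * s = m * s - k * s" "(s - 1) * m = s * m - m"
      by (simp_all add: diff_mult_distrib)
    moreover have "m \<le> s * m"
      using assms by (cases s) auto
    ultimately show ?thesis
      using assms(2) by (simp add: mult.commute)
  qed simp
  have "m * (((m - 1) choose k) * s) \<le> m * ((m choose k) * (s - 1))"
  proof -
    have "m * (((m - 1) choose k) * s) = (m - k) * s * (m choose k)"
      using binomial_absorb_comp[of m k] by (simp add: ac_simps)
    also have "\<dots> \<le> (s - 1) * m * (m choose k)"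
      using \<open>(m - k) * s \<le> (s - 1) * m\<close> by (rule mult_right_mono) simp
    finally show ?thesis
      by (simp add: ac_simps)
  qed
  then show ?thesis
    using assms(1) by simp
qed

lemma binomial_diff_mult_pow_le:
  fixes s k j :: nat
  assumes "2 \<le> s" "j \<le> k"
  shows "((s * k - 1 - j) choose k) * s ^ j \<le> ((s * k - 1) choose k) * (s - 1) ^ j"
  using assms(2)
proof (induction j)
  case (Suc j)
  define m where "m = s * k - 1 - j"
  have "2 * k \<le> s * k"
    using assms(1) by (rule mult_le_mono1)
  then have "0 < m" "m \<le> s * k"
    using Suc.prems unfolding m_def by arith+
  have "((s * k - 1 - Suc j) choose k) * s ^ Suc j = (((m - 1) choose k) * s) * s ^ j"
    by (simp add: m_def ac_simps)
  also have "\<dots> \<le> ((m choose k) * (s - 1)) * s ^ j"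
    using binomial_pred_mult_le[OF \<open>0 < m\<close> \<open>m \<le> s * k\<close>] by (rule mult_right_mono) simp
  also have "\<dots> = ((m choose k) * s ^ j) * (s - 1)"
    by (simp add: ac_simps)
  also have "\<dots> \<le> (((s * k - 1) choose k) * (s - 1) ^ j) * (s - 1)"
    using Suc by (intro mult_right_mono) (auto simp: m_def)
  finally show ?case
    by (simp add: ac_simps)
qed simp

lemma binomial_ratio_le_pow:
  fixes s k :: nat
  assumes "2 \<le> s" "0 < (s * k - 1) choose k"
  shows "real ((s * k - 1 - k) choose k) / real ((s * k - 1) choose k) \<le> ((real s - 1) / real s) ^ k"
proof -
  have "((s * k - 1 - k) choose k) * s ^ k \<le> ((s * k - 1) choose k) * (s - 1) ^ k"
    using binomial_diff_mult_pow_le[of s k k] assms(1) by simp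
  then have "real (((s * k - 1 - k) choose k) * s ^ k) \<le> real (((s * k - 1) choose k) * (s - 1) ^ k)"
    by (simp only: of_nat_le_iff)
  then have "real ((s * k - 1 - k) choose k) * real s ^ k \<le> real ((s * k - 1) choose k) * (real s - 1) ^ k"
    using assms(1) by (simp add: of_nat_diff)
  then show ?thesis
    using assms by (simp add: divide_simps power_divide mult.commute)
qed

lemma rsat_F'_t_complete_le:
  assumes "3 \<le> s" "0 < t" "0 < k"
  defines "N \<equiv> ((s * k - 1) choose k) * t"
  shows "rsat_defined N (F'_t (complete_graph s) 0 1 t) \<and>
    rsat N (F'_t (complete_graph s) 0 1 t) \<le> N * ((t - 1) + t * ((s * k - 1 - k) choose k))"
proof -
  define K where "K = kneser_graph (s * k - 1) k"
  define H where "H = blowup K (complete_graph t)"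
  have wf_K: "wf_graph K"
    using assms(3) by (simp add: K_def wf_graph_kneser_graph)
  have "saturated (F'_t (complete_graph s) 0 1 t) H"
    unfolding H_def K_def using assms(1,2) saturated_kneser_graph[OF assms(3), of s]
    by (intro saturated_blowup_F'_t wf_graph_complete_graph edge_transitive_complete_graph
        is_complete_complete_graph) (auto simp: edge_complete_graph_iff)
  moreover have "regular H"
    unfolding H_def using wf_K wf_graph_complete_graph regular_complete_graph
    by (intro regular_blowup) (simp_all add: K_def regular_kneser_graph assms(3))
  moreover have "card (verts H) = N"
    by (simp add: H_def K_def N_def card_cartesian_product card_verts_kneser_graph)
  moreover have "degree H v \<le> (t - 1) + t * ((s * k - 1 - k) choose k)" if "v \<in> verts H" for v
    using that wf_K assms(3)
    by (auto simp: H_def K_def degree_blowup degree_complete_graph degree_kneser_graph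
        finite_verts_kneser_graph)
  then have "card (edges H) \<le> N * ((t - 1) + t * ((s * k - 1 - k) choose k))"
    using card_edges_le[OF wf_graph_blowup[OF wf_K wf_graph_complete_graph]] \<open>card (verts H) = N\<close>
    unfolding H_def by metis
  ultimately show ?thesis
    using rsat_le_card_edges by (meson order.trans)
qed

lemma rsat_F'_t_complete_ratio_le:
  assumes "3 \<le> s" "0 < t" "0 < k"
  defines "N \<equiv> ((s * k - 1) choose k) * t"
  shows "rsat_defined N (F'_t (complete_graph s) 0 1 t)"
    and "real (rsat N (F'_t (complete_graph s) 0 1 t)) / (real N)^2 \<le> 2 * ((real s - 1) / real s) ^ k"
    and "k \<le> N"
proof -
  define n where "n = s * k - 1"
  define C where "C = n choose k"
  define d where "d = (n - k) choose k"
  define r where "r = rsat N (F'_t (complete_graph s) 0 1 t)"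
  have N: "N = C * t"
    by (simp add: N_def C_def n_def)
  have rsat: "rsat_defined N (F'_t (complete_graph s) 0 1 t)" "r \<le> N * ((t - 1) + t * d)"
    using rsat_F'_t_complete_le[OF assms(1-3)] by (simp_all add: N_def r_def d_def n_def)
  then show "rsat_defined N (F'_t (complete_graph s) 0 1 t)"
    by simp
  have "3 * k \<le> s * k"
    using assms(1) by (rule mult_le_mono1)
  then have "k < n" "k \<le> n - k"
    using assms(3) unfolding n_def by arith+
  then have "n \<le> C" "1 \<le> d"
    using upper_le_binomial[OF assms(3)] by (simp_all add: C_def d_def Suc_le_eq)
  moreover have "C \<le> N"
    using assms(2) by (simp add: N)
  ultimately show "k \<le> N"
    using \<open>k < n\<close> by linarith
  have "t \<le> t * d"
    using mult_le_mono2[OF \<open>1 \<le> d\<close>, of t] by simp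
  then have "(t - 1) + t * d \<le> t * d + t * d"
    by linarith
  then have "r \<le> N * (t * d + t * d)"
    using rsat(2) mult_le_mono2 order.trans by blast
  then have "real r \<le> real (N * (t * d + t * d))"
    by (simp only: of_nat_le_iff)
  then have "real r \<le> real N * (2 * real t * real d)"
    by (simp add: algebra_simps)
  then have "real r / (real N)^2 \<le> real N * (2 * real t * real d) / (real N)^2"
    by (rule divide_right_mono) simp
  also have "\<dots> = 2 * real d / real C"
    using \<open>n \<le> C\<close> \<open>k < n\<close> assms(2) by (simp add: N power2_eq_square field_simps)
  also have "\<dots> \<le> 2 * ((real s - 1) / real s) ^ k"
    using binomial_ratio_le_pow[of s k] assms(1) \<open>n \<le> C\<close> \<open>k < n\<close>
    by (simp add: d_def C_def n_def times_divide_eq_right[symmetric] del: times_divide_eq_right)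
  finally show "real (rsat N (F'_t (complete_graph s) 0 1 t)) / (real N)^2 \<le> 2 * ((real s - 1) / real s) ^ k"
    by (simp add: r_def)
qed

lemma Liminf_le_if_frequently_le:
  fixes f :: "'a \<Rightarrow> 'b::complete_linorder"
  assumes "frequently (\<lambda>x. f x \<le> c) F"
  shows "Liminf F f \<le> c"
proof (rule ccontr)
  assume "\<not> Liminf F f \<le> c"
  then have "eventually (\<lambda>x. c < f x) F"
    using le_Liminf_iff[of "Liminf F f" F f] by (simp add: not_le)
  then have "\<not> frequently (\<lambda>x. f x \<le> c) F"
    by (simp add: not_frequently not_le)
  with assms show False
    by contradiction
qed

lemma Liminf_rsat_F'_t_complete:
  assumes "3 \<le> s" "0 < t"
  shows "Liminf (inf sequentially (principal {n. rsat_defined n (F'_t (complete_graph s) 0 1 t)}))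
    (\<lambda>n. ereal (real (rsat n (F'_t (complete_graph s) 0 1 t)) / (real n)^2)) = 0"
    (is "Liminf (inf sequentially (principal ?S)) ?f = 0")
proof (rule antisym)
  show "Liminf (inf sequentially (principal ?S)) ?f \<le> 0"
  proof (rule ereal_le_epsilon2)
    fix e :: real assume "0 < e"
    define q where "q = (real s - 1) / real s"
    have "0 \<le> q" "q < 1"
      using assms(1) by (simp_all add: q_def)
    then obtain k0 where k0: "q ^ k0 < e / 2"
      using real_arch_pow_inv[of "e / 2" q] \<open>0 < e\<close> by auto
    have "\<exists>n\<ge>M. n \<in> ?S \<and> ?f n \<le> ereal e" for M
    proof -
      define k where "k = max k0 (max M 1)"
      define N where "N = ((s * k - 1) choose k) * t"
      have "0 < k"
        by (simp add: k_def)
      note ratio = rsat_F'_t_complete_ratio_le[OF assms \<open>0 < k\<close>, folded N_def]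
      have "q ^ k \<le> q ^ k0"
        using \<open>0 \<le> q\<close> \<open>q < 1\<close> by (intro power_decreasing) (simp_all add: k_def)
      then have "?f N \<le> ereal e"
        using ratio(2) k0 by (simp add: q_def)
      moreover have "M \<le> N"
        using ratio(3) by (simp add: k_def)
      ultimately show ?thesis
        using ratio(1) by blast
    qed
    then have "frequently (\<lambda>n. ?f n \<le> ereal e) (inf sequentially (principal ?S))"
      by (simp add: frequently_def eventually_inf_principal eventually_sequentially)
    then show "Liminf (inf sequentially (principal ?S)) ?f \<le> 0 + ereal e"
      by (simp add: Liminf_le_if_frequently_le)
  qed
  show "0 \<le> Liminf (inf sequentially (principal ?S)) ?f"
    by (rule Liminf_bounded) (simp add: always_eventually)
qed

theorem theorem3p1:
  fixes F :: "'b graph" and G :: "'a graph" and x y :: 'b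
  assumes "wf_graph F" and "edge_transitive F" and "{x, y} \<in> edges F" and "x \<noteq> y"
    and "regular G" and "saturated F G"
  shows "(\<forall>t\<ge>2. regular (blowup G (complete_graph t)) \<and>
                 oversaturated (F'_t F x y t) (blowup G (complete_graph t)))
       \<and> (is_complete F \<and> card (verts F) \<ge> 3 \<longrightarrow>
            (\<forall>t\<ge>2. saturated (F'_t F x y t) (blowup G (complete_graph t))))
       \<and> (\<forall>s t. s \<ge> 3 \<and> t \<ge> 2 \<longrightarrow>
            Liminf (inf sequentially (principal {n. rsat_defined n (F'_t (complete_graph s) 0 1 t)}))
              (\<lambda>n. ereal (real (rsat n (F'_t (complete_graph s) 0 1 t)) / (real n)^2)) = 0)"
proof (intro conjI allI impI)
  fix t :: nat
  have "wf_graph G"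
    using assms(6) by (simp add: saturated_def)
  then show "regular (blowup G (complete_graph t))"
    using assms(5) by (intro regular_blowup wf_graph_complete_graph regular_complete_graph)
  show "oversaturated (F'_t F x y t) (blowup G (complete_graph t))"
    using assms(1-3,6) by (rule oversaturated_blowup_F'_t)
next
  fix t :: nat
  assume "is_complete F \<and> 3 \<le> card (verts F)" "2 \<le> t"
  then show "saturated (F'_t F x y t) (blowup G (complete_graph t))"
    using saturated_blowup_F'_t[OF assms(1,2) _ assms(3,6)] by simp
next
  fix s t :: nat
  assume "3 \<le> s \<and> 2 \<le> t"
  then show "Liminf (inf sequentially (principal {n. rsat_defined n (F'_t (complete_graph s) 0 1 t)}))
      (\<lambda>n. ereal (real (rsat n (F'_t (complete_graph s) 0 1 t)) / (real n)^2)) = 0"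
    using Liminf_rsat_F'_t_complete by simp
qed

end
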